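(* Let $x=(x_1,\dots,x_5)\in\mathbb{Z}_{\ge 0}^5$ and let $y=(y_1,\dots,y_5)$ be obtained from $x$ by a move of the exact $(5,2)$ nim, i.e. there are two distinct indices $a\neq b$ with $y_a<x_a$, $y_b<x_b$, and $y_c=x_c$ for all $c\notin\{a,b\}$. Suppose the move changes the leader, i.e. there is an index $i\in\{a,b\}$ with $x_i=\max_{1\le c\le 5}x_c$ and $y_i<\max_{1\le c\le 5}y_c$. Then it is not the case that both $\hat x$ and $\hat y$ are P-positions of Moore's nim $(4,\le 2)$. In other words, there is no move in the exact $(5,2)$ nim from a $*P$ position to a $*P$ position that changes the leader.
   Context: Positions of the exact $(5,2)$ nim are vectors of $5$ nonnegative integers (pile sizes); a move consists of choosing exactly two piles and removing a positive number of stones from each of them. For a position $z\in\mathbb{Z}_{\ge0}^5$, the reduced position $\hat z\in\mathbb{Z}_{\ge0}^4$ is the multiset of pile sizes obtained from $z$ by deleting one copy of its maximum pile (the "leader"); equivalently, if $z$ is sorted as $z_{(1)}\le\dots\le z_{(5)}$, then $\hat z=(z_{(1)},z_{(2)},z_{(3)},z_{(4)})$. Moore's nim $(4,\le 2)$ is played on $4$ piles, a move removing a positive number of stones from at least one and at most two piles; the player unable to move loses. A position $w=(w_1,\dots,w_4)$ of it is a P-position iff for every bit position $j\ge 0$ the number of indices $r\in\{1,2,3,4\}$ whose $j$-th binary digit of $w_r$ equals $1$ is divisible by $3$ (i.e. equals $0$ or $3$). A position $z$ of the exact $(5,2)$ nim is called $*P$ if $\hat z$ is a P-position of Moore's nim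 $(4,\le 2)$. *)

theory Defs
  imports Main
begin

text \<open>Positions of exact (5,2) nim are lists of 5 natural numbers (indices 0..4).
  The reduced position deletes one copy of the maximum pile (the leader).\<close>

definition reduced :: "nat list \<Rightarrow> nat list" where
  "reduced z = remove1 (Max (set z)) z"

definition moore_P :: "nat list \<Rightarrow> bool" where
  "moore_P w \<longleftrightarrow> length w = 4 \<and>
     (\<forall>j. 3 dvd card {r. r < 4 \<and> bit (w ! r) j})"

definition starP :: "nat list \<Rightarrow> bool" where
  "starP z \<longleftrightarrow> moore_P (reduced z)"

end

theory Submission
  imports Defs "HOL-Library.Multiset"
begin

text \<open>Let \<open>Z\<close> be the three piles left alone by the move. Say \<open>i = a\<close>; since \<open>x\<^sub>a\<close> is the leader of \<open>x\<close>,
  the reduced position of \<open>x\<close> is \<open>Z + {x\<^sub>b}\<close>. The leader \<open>M\<close> of \<open>y\<close> is not \<open>y\<^sub>a\<close>, so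
  either \<open>M = y\<^sub>b\<close> and the reduced position of \<open>y\<close> is \<open>Z + {y\<^sub>a}\<close>, or \<open>Z = Z' + {M}\<close> and the
  reduced positions are \<open>Z' + {M, x\<^sub>b}\<close> and \<open>Z' + {y\<^sub>a, y\<^sub>b}\<close>. Since \<open>y\<^sub>a < M\<close> and
  \<open>y\<^sub>b < x\<^sub>b\<close>, in both cases a move of Moore's nim \<open>(4, \<le> 2)\<close> leads from one
  reduced position to the other. Such a move never joins two P-positions: at the highest bit
  where some lowered pile changes, the number of ones drops by one or two.\<close>

definition bit_count :: "nat multiset \<Rightarrow> nat \<Rightarrow> nat" where
  "bit_count A j = size (filter_mset (\<lambda>v. bit v j) A)"

text \<open>P-positions of Moore's nim in which a move lowers at most \<open>k\<close> piles.\<close>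

definition moore_nim_P :: "nat \<Rightarrow> nat multiset \<Rightarrow> bool" where
  "moore_nim_P k A \<longleftrightarrow> (\<forall>j. Suc k dvd bit_count A j)"

lemma bit_count_union [simp]: "bit_count (A + B) j = bit_count A j + bit_count B j"
  by (simp add: bit_count_def)

lemma bit_count_le_size: "bit_count A j \<le> size A"
  by (simp add: bit_count_def)

lemma bit_count_mset: "bit_count (mset w) j = card {r. r < length w \<and> bit (w ! r) j}"
  unfolding bit_count_def by (simp flip: mset_filter add: length_filter_conv_card)

lemma moore_P_iff_moore_nim_P: "moore_P w \<longleftrightarrow> length w = 4 \<and> moore_nim_P 2 (mset w)"
  by (auto simp: moore_P_def moore_nim_P_def bit_count_mset)

lemma starP_iff_moore_nim_P:
  assumes "length z = 5"
  shows "starP z \<longleftrightarrow> moore_nim_P 2 (mset z - {#Max (set z)#})"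
proof -
  have "Max (set z) \<in> set z"
    using assms by (intro Max_in) auto
  then show ?thesis
    using assms by (simp add: starP_def reduced_def moore_P_iff_moore_nim_P length_remove1)
qed

lemma bit_le_of_div_eq:
  fixes u v :: nat
  assumes "v \<le> u" and "u div 2 ^ Suc j = v div 2 ^ Suc j"
  shows "bit v j \<longrightarrow> bit u j"
    and "u div 2 ^ j \<noteq> v div 2 ^ j \<Longrightarrow> bit u j \<and> \<not> bit v j"
proof -
  define p q where "p = u div 2 ^ j" and "q = v div 2 ^ j"
  have "q \<le> p"
    using assms(1) by (simp add: p_def q_def div_le_mono)
  moreover have "p div 2 = q div 2"
    using assms(2) by (simp only: p_def q_def power_Suc2 div_mult2_eq)
  ultimately have "odd q \<longrightarrow> odd p" and "p \<noteq> q \<Longrightarrow> odd p \<and> even q"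
    by presburger+
  then show "bit v j \<longrightarrow> bit u j" and "u div 2 ^ j \<noteq> v div 2 ^ j \<Longrightarrow> bit u j \<and> \<not> bit v j"
    by (simp_all add: bit_iff_odd p_def q_def)
qed

lemma exists_bit_dominated:
  fixes P :: "(nat \<times> nat) multiset"
  assumes le: "\<forall>(u, v) \<in># P. v \<le> u" and ne: "\<exists>(u, v) \<in># P. v \<noteq> u"
  shows "\<exists>j. (\<forall>(u, v) \<in># P. bit v j \<longrightarrow> bit u j) \<and> (\<exists>(u, v) \<in># P. bit u j \<and> \<not> bit v j)"
proof -
  define agree where "agree m \<longleftrightarrow> (\<forall>(u, v) \<in># P. u div 2 ^ m = v div 2 ^ m)" for m
  define N where "N = Max (fst ` set_mset P)"
  have "agree N"
    unfolding agree_def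
  proof clarify
    fix u v assume uv: "(u, v) \<in># P"
    have "u \<le> N"
      unfolding N_def using uv by (intro Max_ge) force+
    moreover have "v \<le> u"
      using uv le by auto
    ultimately have "v < 2 ^ N" "u < 2 ^ N"
      using less_exp[of N] by linarith+
    then show "u div 2 ^ N = v div 2 ^ N"
      by simp
  qed
  moreover have "\<not> agree 0"
    using ne by (auto simp: agree_def)
  ultimately obtain j where j: "agree (Suc j)" "\<not> agree j"
    by (metis LeastI not_less_Least lessI not0_implies_Suc)
  have "\<forall>(u, v) \<in># P. bit v j \<longrightarrow> bit u j"
    using j(1) le bit_le_of_div_eq(1) by (fastforce simp: agree_def)
  moreover have "\<exists>(u, v) \<in># P. bit u j \<and> \<not> bit v j"
    using j le bit_le_of_div_eq(2) by (fastforce simp: agree_def)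
  ultimately show ?thesis
    by blast
qed

lemma exists_bit_count_snd_less_fst:
  fixes P :: "(nat \<times> nat) multiset"
  assumes "\<forall>(u, v) \<in># P. v \<le> u" and "\<exists>(u, v) \<in># P. v \<noteq> u"
  shows "\<exists>j. bit_count (image_mset snd P) j < bit_count (image_mset fst P) j"
proof -
  obtain j where dom: "\<forall>(u, v) \<in># P. bit v j \<longrightarrow> bit u j"
    and strict: "\<exists>(u, v) \<in># P. bit u j \<and> \<not> bit v j"
    using exists_bit_dominated[OF assms] by blast
  let ?V = "filter_mset (\<lambda>p. bit (snd p) j) P" and ?U = "filter_mset (\<lambda>p. bit (fst p) j) P"
  have "?V \<subseteq># ?U"
    using dom by (intro filter_mset_mono_strong) auto
  moreover have "?V \<noteq> ?U"
  proof -
    from strict obtain u v where "(u, v) \<in># P" "bit u j" "\<not> bit v j"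
      by blast
    then have "count ?V (u, v) \<noteq> count ?U (u, v)"
      by simp
    then show ?thesis
      by metis
  qed
  ultimately have "size ?V < size ?U"
    by (intro mset_subset_size) (simp add: subset_mset.less_le)
  then show ?thesis
    by (auto simp: bit_count_def filter_mset_image_mset)
qed

text \<open>A move is encoded as a multiset of (old, new) pile pairs; the piles \<open>C\<close> stay fixed.\<close>

lemma moore_nim_P_no_move_between:
  fixes P :: "(nat \<times> nat) multiset"
  assumes "size P \<le> k" and "\<forall>(u, v) \<in># P. v \<le> u" and "\<exists>(u, v) \<in># P. v \<noteq> u"
    and "moore_nim_P k (C + image_mset fst P)"
  shows "\<not> moore_nim_P k (C + image_mset snd P)"
proof
  assume P_after: "moore_nim_P k (C + image_mset snd P)"
  obtain j where less: "bit_count (image_mset snd P) j < bit_count (image_mset fst P) j"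
    using exists_bit_count_snd_less_fst[OF assms(2,3)] by blast
  let ?c = "bit_count C j" and ?p = "bit_count (image_mset fst P) j"
    and ?q = "bit_count (image_mset snd P) j"
  have "Suc k dvd (?c + ?p) - (?c + ?q)"
    using assms(4) P_after by (intro dvd_diff_nat) (simp_all add: moore_nim_P_def)
  moreover have "0 < (?c + ?p) - (?c + ?q)" "(?c + ?p) - (?c + ?q) < Suc k"
    using less bit_count_le_size[of "image_mset fst P" j] assms(1) by simp_all
  ultimately show False
    using nat_dvd_not_less by blast
qed

lemma two_nth_subset_mset:
  assumes "a < length xs" and "b < length xs" and "a \<noteq> b"
  shows "{#xs ! a, xs ! b#} \<subseteq># mset xs"
proof -
  have "{a, b} \<subseteq> {i. i < length xs \<and> xs ! i = xs ! b}" if "xs ! a = xs ! b"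
    using assms that by auto
  then have "xs ! a = xs ! b \<Longrightarrow> 2 \<le> count (mset xs) (xs ! b)"
    using assms(3) card_mono[of "{i. i < length xs \<and> xs ! i = xs ! b}" "{a, b}"]
    by (auto simp: count_mset count_list_eq_length_filter length_filter_conv_card eq_commute)
  then have "xs ! b \<in># mset xs - {#xs ! a#}"
    using assms(2) by (cases "xs ! a = xs ! b") (auto simp: in_diff_count)
  then show ?thesis
    using assms(1) by (simp add: insert_subset_eq_iff)
qed

lemma mset_list_update_add: "i < length xs \<Longrightarrow> mset (xs[i := v]) + {#xs ! i#} = mset xs + {#v#}"
  by (simp add: mset_update)

lemma mset_eq_outside_two_indices:
  assumes "length y = length x" and "a < length x" and "b < length x" and "a \<noteq> b"
    and "\<forall>c < length x. c \<noteq> a \<and> c \<noteq> b \<longrightarrow> y ! c = x ! c"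
  obtains Z where "mset x = Z + {#x ! a, x ! b#}" and "mset y = Z + {#y ! a, y ! b#}"
proof
  define Z where "Z = mset x - {#x ! a, x ! b#}"
  show x: "mset x = Z + {#x ! a, x ! b#}"
    unfolding Z_def using two_nth_subset_mset[OF assms(2-4)] by (rule subset_mset.diff_add[symmetric])
  have "y = x[a := y ! a, b := y ! b]"
    using assms by (intro nth_equalityI) (auto simp: nth_list_update)
  then have "mset y + {#x ! b#} + {#x ! a#} = mset x + {#y ! a#} + {#y ! b#}"
    using mset_list_update_add[of b "x[a := y ! a]" "y ! b"] mset_list_update_add[of a x "y ! a"]
      assms(2-4) by (simp add: nth_list_update)
  then show "mset y = Z + {#y ! a, y ! b#}"
    by (subst (asm) x) (simp add: add_mset_commute)
qed

lemma leader_change_not_starP_to_starP: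
  fixes x y :: "nat list" and a b :: nat
  assumes "length x = 5" and "length y = 5"
    and "a < 5" and "b < 5" and "a \<noteq> b"
    and "y ! b < x ! b"
    and "\<forall>c<5. c \<noteq> a \<and> c \<noteq> b \<longrightarrow> y ! c = x ! c"
    and "x ! a = Max (set x)" and "y ! a < Max (set y)"
    and "starP x"
  shows "\<not> starP y"
proof -
  obtain Z where Zx: "mset x = Z + {#x ! a, x ! b#}" and Zy: "mset y = Z + {#y ! a, y ! b#}"
    using mset_eq_outside_two_indices[of y x a b] assms(1-5,7) by auto
  let ?M = "Max (set y)"
  have P_x: "moore_nim_P 2 (add_mset (x ! b) Z)"
    using assms(10) Zx assms(8) by (simp add: starP_iff_moore_nim_P[OF assms(1)])
  have "?M \<in> set y"
    using assms(2) by (intro Max_in) auto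
  then consider "?M = y ! b" | "?M \<in># Z"
    using Zy assms(9) by (auto simp flip: set_mset_mset)
  then show ?thesis
  proof cases
    case 1
    have "y ! a < x ! b"
      using assms(6,9) 1 by simp
    then have "\<not> moore_nim_P 2 (Z + image_mset snd {#(x ! b, y ! a)#})"
      using P_x by (intro moore_nim_P_no_move_between) auto
    then show ?thesis
      using Zy 1 by (simp add: starP_iff_moore_nim_P[OF assms(2)])
  next
    case 2
    then obtain Z' where Z': "Z = add_mset ?M Z'"
      by (metis insert_DiffM)
    have "\<not> moore_nim_P 2 (Z' + image_mset snd {#(?M, y ! a), (x ! b, y ! b)#})"
      using P_x Z' assms(6,9) by (intro moore_nim_P_no_move_between) (auto simp: add_mset_commute)
    then show ?thesis
      using Zy Z' by (simp add: starP_iff_moore_nim_P[OF assms(2)] add_mset_commute)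
  qed
qed

theorem lemma11:
  fixes x y :: "nat list" and a b i :: nat
  assumes "length x = 5" and "length y = 5"
    and "a < 5" and "b < 5" and "a \<noteq> b"
    and "y ! a < x ! a" and "y ! b < x ! b"
    and "\<forall>c<5. c \<noteq> a \<and> c \<noteq> b \<longrightarrow> y ! c = x ! c"
    and "i = a \<or> i = b"
    and "x ! i = Max (set x)" and "y ! i < Max (set y)"
  shows "\<not> (starP x \<and> starP y)"
  using assms(9)
proof
  assume "i = a"
  then show ?thesis
    using leader_change_not_starP_to_starP[of x y a b] assms by blast
next
  assume "i = b"
  then show ?thesis
    using leader_change_not_starP_to_starP[of x y b a] assms by blast
qed

end
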